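(* Let $f\in C^1[0,1]$ with $f(0)=0$, $h:=f'$; let $D\in C^1[0,1]$ with $D>0$ on $(0,1)$, $D(1)=0$; let $g\in C[0,1]$ with $g>0$ on $(0,1]$, $g(0)=0$; assume $\limsup_{\varphi\to0^+}D(\varphi)g(\varphi)/\varphi<+\infty$. Set $q:=Dg$, let $c\ge c^*$ and let $z$ be the solution of $(P_c)$ with $z(1)=0$. Then $$\lim_{\varphi\to1^-}\frac{D(\varphi)}{z(\varphi)}=\begin{cases}\dfrac{h(1)-c-\sqrt{(h(1)-c)^2-4D'(1)g(1)}}{2g(1)} & \text{if } D'(1)<0,\\[2mm] \min\Big\{0,\dfrac{h(1)-c}{g(1)}\Big\} & \text{if } D'(1)=0.\end{cases}$$
   Context: For $c\in\mathbb R$, a solution of problem $(P_c)$ (with $q=Dg$) is a function $z\in C[0,1]\cap C^1(0,1)$ with $\dot z(\varphi)=h(\varphi)-c-q(\varphi)/z(\varphi)$ and $z(\varphi)<0$ for all $\varphi\in(0,1)$, and $z(0)=0$. $c^*$ denotes the real number such that $(P_c)$ has a solution with $z(1)=0$ iff $c\ge c^*$, this solution then being unique. *)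

theory Defs
  imports "HOL-Analysis.Analysis" "HOL-Library.Liminf_Limsup"
begin

definition solP :: "(real \<Rightarrow> real) \<Rightarrow> (real \<Rightarrow> real) \<Rightarrow> real \<Rightarrow> (real \<Rightarrow> real) \<Rightarrow> bool" where
  "solP h q c z \<longleftrightarrow>
     continuous_on {0..1} z \<and>
     (\<forall>\<phi>\<in>{0<..<1}. z differentiable (at \<phi>)) \<and>
     continuous_on {0<..<1} (deriv z) \<and>
     (\<forall>\<phi>\<in>{0<..<1}. deriv z \<phi> = h \<phi> - c - q \<phi> / z \<phi>) \<and>
     (\<forall>\<phi>\<in>{0<..<1}. z \<phi> < 0) \<and>
     z 0 = 0"

end

theory Submission
  imports Defs
begin

text \<open>The ratio \<open>w = D/z\<close> satisfies the Riccati-type equation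
  \<open>w' = (g w\<^sup>2 - (h - c) w + D') / z\<close> on \<open>(0,1)\<close>. If \<open>y < 0\<close> and the limiting quadratic
  \<open>Q(v) = g(1) v\<^sup>2 - (h(1) - c) v + D'(1)\<close> is negative at \<open>y\<close>, then near \<open>1\<close> the level \<open>y\<close> can only be
  crossed downwards by \<open>w\<close>; if \<open>w\<close> stayed above \<open>y\<close>, the mean value theorem for \<open>z\<close> and the
  difference quotient \<open>D(\<phi>)/(1-\<phi>) \<rightarrow> -D'(1)\<close> would force \<open>Q(y) \<ge> 0\<close>. Symmetrically for levels where
  \<open>Q > 0\<close>. Hence \<open>w\<close> tends to the smaller root of \<open>Q\<close>, which for \<open>D'(1) = 0\<close> is \<open>min 0 ((h(1)-c)/g(1))\<close>.\<close>

lemma ge_level_preserved: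
  fixes f :: "real \<Rightarrow> real"
  assumes "continuous_on {a..b} f" and "f a \<ge> y"
    and "\<And>t. t \<in> {a..<b} \<Longrightarrow> f t = y \<Longrightarrow> \<exists>l>0. (f has_real_derivative l) (at t)"
  shows "\<forall>t\<in>{a..b}. f t \<ge> y"
proof (rule ccontr)
  assume "\<not> ?thesis"
  then obtain t1 where t1: "t1 \<in> {a..b}" "f t1 < y" by force
  have cont_t1: "continuous_on {a..t1} f"
    using assms(1) t1 by (auto intro: continuous_on_subset)
  define S where "S = {t\<in>{a..t1}. f t = y}"
  have S_ne: "S \<noteq> {}"
    using IVT2'[of f t1 y a, OF _ assms(2) _ cont_t1] t1 by (auto simp: S_def)
  have S_compact: "compact S"
  proof (rule compact_eq_bounded_closed[THEN iffD2, OF conjI])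
    show "bounded S" by (rule bounded_subset[of "{a..t1}"]) (auto simp: S_def)
    show "closed S"
      unfolding S_def by (rule continuous_closed_preimage_constant[OF cont_t1]) auto
  qed
  obtain ts where ts: "ts \<in> S" "\<forall>s\<in>S. s \<le> ts"
    using compact_attains_sup[OF S_compact S_ne] by blast
  have fts: "f ts = y" and a_ts: "a \<le> ts" and "ts \<le> t1"
    using ts(1) by (auto simp: S_def)
  with t1(2) have ts_lt: "ts < t1"
    by (cases "ts = t1") auto
  with a_ts t1(1) have "ts \<in> {a..<b}"
    by simp
  then obtain l where "l > 0" "(f has_real_derivative l) (at ts)"
    using assms(3) fts by blast
  then obtain d where d: "d > 0" "\<And>e. e > 0 \<Longrightarrow> e < d \<Longrightarrow> f ts < f (ts + e)"
    using DERIV_pos_inc_right by blast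
  define e where "e = min (d/2) ((t1 - ts)/2)"
  have e: "0 < e" "e < d" "e < t1 - ts"
    using d(1) ts_lt by (auto simp: e_def min_def)
  define s where "s = ts + e"
  have s: "ts < s" "s < t1" "y < f s"
    using d(2)[OF e(1,2)] e fts by (auto simp: s_def)
  have "continuous_on {s..t1} f"
    using cont_t1 s a_ts by (auto intro: continuous_on_subset)
  then obtain x where "s \<le> x" "x \<le> t1" "f x = y"
    using IVT2'[of f t1 y s] s t1 by auto
  with s a_ts have "x \<in> S" "ts < x" by (auto simp: S_def)
  with ts(2) show False by auto
qed

lemma le_level_preserved:
  fixes f :: "real \<Rightarrow> real"
  assumes "continuous_on {a..b} f" and "f a \<le> y"
    and "\<And>t. t \<in> {a..<b} \<Longrightarrow> f t = y \<Longrightarrow> \<exists>l<0. (f has_real_derivative l) (at t)"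
  shows "\<forall>t\<in>{a..b}. f t \<le> y"
proof -
  have "\<forall>t\<in>{a..b}. - f t \<ge> - y"
  proof (rule ge_level_preserved)
    show "continuous_on {a..b} (\<lambda>t. - f t)"
      using assms(1) by (intro continuous_intros)
    fix t assume "t \<in> {a..<b}" "- f t = - y"
    then obtain l where "l < 0" "(f has_real_derivative l) (at t)"
      using assms(3) by auto
    then show "\<exists>l>0. ((\<lambda>t. - f t) has_real_derivative l) (at t)"
      by (intro exI[of _ "- l"]) (auto intro: derivative_intros)
  qed (use assms(2) in simp)
  then show ?thesis by auto
qed

lemma quadratic_sign_near_smaller_root:
  fixes a b d v :: real
  assumes b: "b > 0" and d: "d \<le> 0"
  defines "r \<equiv> (a - sqrt (a\<^sup>2 - 4 * d * b)) / (2 * b)"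
  shows "r \<le> 0"
    and "r < v \<Longrightarrow> v < 0 \<Longrightarrow> b * v\<^sup>2 - a * v + d < 0"
    and "v < r \<Longrightarrow> b * v\<^sup>2 - a * v + d > 0"
proof -
  define s where "s = sqrt (a\<^sup>2 - 4 * d * b)"
  have discr: "a\<^sup>2 \<le> a\<^sup>2 - 4 * d * b"
    using b d by (simp add: mult_nonpos_nonneg)
  have s2: "s\<^sup>2 = a\<^sup>2 - 4 * d * b"
    unfolding s_def using discr by (intro real_sqrt_pow2) (use zero_le_power2[of a] in linarith)
  have "\<bar>a\<bar> \<le> s"
    unfolding s_def using real_sqrt_le_mono[OF discr] by simp
  define R where "R = (a + s) / (2 * b)"
  have r_R: "r \<le> 0" "0 \<le> R"
    using \<open>\<bar>a\<bar> \<le> s\<close> b by (auto simp: r_def R_def s_def divide_nonpos_pos)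
  have factor: "b * v\<^sup>2 - a * v + d = b * ((v - r) * (v - R))" for v
    using b s2 by (simp add: r_def R_def s_def field_simps power2_eq_square)
  show "r \<le> 0" by (fact r_R(1))
  show "r < v \<Longrightarrow> v < 0 \<Longrightarrow> b * v\<^sup>2 - a * v + d < 0"
    using r_R b by (simp add: factor mult_pos_neg)
  show "v < r \<Longrightarrow> b * v\<^sup>2 - a * v + d > 0"
    using r_R b by (simp add: factor mult_neg_neg)
qed

lemma smaller_root_degenerate:
  fixes a b d :: real
  assumes "b > 0" and "d = 0"
  shows "(a - sqrt (a\<^sup>2 - 4 * d * b)) / (2 * b) = min 0 (a / b)"
  using assms by (auto simp: min_def field_simps)

locale solution_vanishing_at_one =
  fixes h D D' g z :: "real \<Rightarrow> real" and c :: real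
  assumes D_deriv: "\<forall>x\<in>{0..1}. (D has_real_derivative D' x) (at x within {0..1})"
    and D'_cont: "continuous_on {0..1} D'"
    and h_cont: "continuous_on {0..1} h"
    and D_pos: "\<forall>x\<in>{0<..<1}. D x > 0"
    and D1: "D 1 = 0"
    and g_cont: "continuous_on {0..1} g"
    and g_pos: "\<forall>x\<in>{0<..1}. g x > 0"
    and z_sol: "solP h (\<lambda>\<phi>. D \<phi> * g \<phi>) c z"
    and z1: "z 1 = 0"
begin

definition Q :: "real \<Rightarrow> real \<Rightarrow> real" where
  "Q t v = g t * v\<^sup>2 - (h t - c) * v + D' t"

lemma g_pos_at_1: "g 1 > 0"
  using g_pos by simp

lemma z_neg: "t \<in> {0<..<1} \<Longrightarrow> z t < 0"
  using z_sol by (auto simp: solP_def)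

lemma ratio_neg: "t \<in> {0<..<1} \<Longrightarrow> D t / z t < 0"
  using D_pos z_neg by (simp add: divide_pos_neg)

lemma z_has_derivative:
  assumes "t \<in> {0<..<1}"
  shows "(z has_real_derivative h t - c - g t * (D t / z t)) (at t)"
proof -
  have "(z has_real_derivative deriv z t) (at t)"
    using z_sol assms unfolding solP_def by (blast intro: DERIV_deriv_iff_real_differentiable[THEN iffD2])
  moreover have "deriv z t = h t - c - g t * (D t / z t)"
    using z_sol assms by (simp add: solP_def)
  ultimately show ?thesis by simp
qed

lemma D_has_derivative:
  assumes "t \<in> {0<..<1}"
  shows "(D has_real_derivative D' t) (at t)"
proof -
  have "(D has_real_derivative D' t) (at t within {0..1})"
    using D_deriv assms by auto
  moreover have "at t within {0..1} = at t"
    using assms by (intro at_within_Icc_at) auto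
  ultimately show ?thesis by simp
qed

lemma ratio_has_derivative:
  assumes "t \<in> {0<..<1}"
  shows "((\<lambda>t. D t / z t) has_real_derivative Q t (D t / z t) / z t) (at t)"
proof -
  have zt: "z t \<noteq> 0"
    using z_neg assms by force
  have "(D' t * z t - D t * (h t - c - g t * (D t / z t))) / (z t * z t) = Q t (D t / z t) / z t"
    using zt by (simp add: Q_def field_simps power2_eq_square)
  then show ?thesis
    using DERIV_divide[OF D_has_derivative[OF assms] z_has_derivative[OF assms] zt] by simp
qed

lemma ratio_continuous_on:
  assumes "0 < p" "q < 1"
  shows "continuous_on {p..q} (\<lambda>t. D t / z t)"
proof (intro continuous_at_imp_continuous_on ballI)
  fix t assume "t \<in> {p..q}"
  with assms show "isCont (\<lambda>t. D t / z t) t"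
    by (intro DERIV_isCont[OF ratio_has_derivative]) auto
qed

lemma Q_tendsto: "((\<lambda>t. Q t v) \<longlongrightarrow> Q 1 v) (at_left 1)"
  unfolding Q_def
  by (intro tendsto_intros continuous_on_Icc_at_leftD[OF _ zero_less_one] g_cont h_cont D'_cont)

lemma D_difference_quotient: "((\<lambda>t. D t / (1 - t)) \<longlongrightarrow> - D' 1) (at_left 1)"
proof -
  have "((\<lambda>t. (D t - D 1) / (t - 1)) \<longlongrightarrow> D' 1) (at 1 within {0..1})"
    using D_deriv by (simp add: has_field_derivative_iff)
  then have "((\<lambda>t. - ((D t - D 1) / (t - 1))) \<longlongrightarrow> - D' 1) (at_left 1)"
    by (intro tendsto_minus) (simp add: at_within_Icc_at_left)
  moreover have "- ((D t - D 1) / (t - 1)) = D t / (1 - t)" for t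
    using D1 by (simp add: divide_minus_right[symmetric])
  ultimately show ?thesis by simp
qed

lemma z_mean_value:
  assumes "p \<in> {0<..<1}"
  obtains \<xi> where "p < \<xi>" "\<xi> < 1" "- z p = (1 - p) * (h \<xi> - c - g \<xi> * (D \<xi> / z \<xi>))"
proof -
  have "continuous_on {p..1} z"
    using z_sol assms by (auto simp: solP_def intro: continuous_on_subset)
  moreover have "z differentiable (at x)" if "p < x" "x < 1" for x
    using z_sol assms that by (auto simp: solP_def)
  ultimately obtain l \<xi> where \<xi>: "p < \<xi>" "\<xi> < 1" "(z has_real_derivative l) (at \<xi>)"
      "z 1 - z p = (1 - p) * l"
    using MVT[of p 1 z] assms by auto
  moreover have "l = h \<xi> - c - g \<xi> * (D \<xi> / z \<xi>)"
    using \<xi> assms by (intro DERIV_unique[OF \<xi>(3) z_has_derivative]) auto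
  ultimately show ?thesis
    using that z1 by auto
qed

lemma D_quotient_le_if_ratio_ge_on_tail:
  assumes p: "p \<in> {0<..<1}" and "y \<le> 0" and tail: "\<forall>t\<in>{p..<1}. y \<le> D t / z t"
  obtains \<xi> where "p < \<xi>" "\<xi> < 1" "D p / (1 - p) \<le> - y * (h \<xi> - c - g \<xi> * y)"
proof -
  obtain \<xi> where \<xi>: "p < \<xi>" "\<xi> < 1" "- z p = (1 - p) * (h \<xi> - c - g \<xi> * (D \<xi> / z \<xi>))"
    using z_mean_value[OF p] .
  have "g \<xi> > 0"
    using g_pos \<xi> p by auto
  then have "g \<xi> * y \<le> g \<xi> * (D \<xi> / z \<xi>)"
    using tail \<xi> by (intro mult_left_mono) auto
  with \<xi> p have z_bound: "- z p \<le> (1 - p) * (h \<xi> - c - g \<xi> * y)"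
    by (simp add: mult_left_mono)
  have "D p \<le> y * z p"
    using tail z_neg[OF p] p by (simp add: le_divide_eq)
  also have "\<dots> = - y * (- z p)" by simp
  also have "\<dots> \<le> - y * ((1 - p) * (h \<xi> - c - g \<xi> * y))"
    using z_bound \<open>y \<le> 0\<close> by (intro mult_left_mono) auto
  finally have "D p / (1 - p) \<le> - y * (h \<xi> - c - g \<xi> * y)"
    using p by (simp add: pos_divide_le_eq mult_ac)
  with \<xi> that show ?thesis by blast
qed

lemma D_quotient_ge_if_ratio_le_on_tail:
  assumes p: "p \<in> {0<..<1}" and "y \<le> 0" and tail: "\<forall>t\<in>{p..<1}. D t / z t \<le> y"
  obtains \<xi> where "p < \<xi>" "\<xi> < 1" "- y * (h \<xi> - c - g \<xi> * y) \<le> D p / (1 - p)"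
proof -
  obtain \<xi> where \<xi>: "p < \<xi>" "\<xi> < 1" "- z p = (1 - p) * (h \<xi> - c - g \<xi> * (D \<xi> / z \<xi>))"
    using z_mean_value[OF p] .
  have "g \<xi> > 0"
    using g_pos \<xi> p by auto
  then have "g \<xi> * (D \<xi> / z \<xi>) \<le> g \<xi> * y"
    using tail \<xi> by (intro mult_left_mono) auto
  with \<xi> p have z_bound: "(1 - p) * (h \<xi> - c - g \<xi> * y) \<le> - z p"
    by (simp add: mult_left_mono)
  have "- y * ((1 - p) * (h \<xi> - c - g \<xi> * y)) \<le> - y * (- z p)"
    using z_bound \<open>y \<le> 0\<close> by (intro mult_left_mono) auto
  also have "\<dots> = y * z p" by simp
  also have "\<dots> \<le> D p"
    using tail z_neg[OF p] p by (simp add: divide_le_eq)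
  finally have "- y * (h \<xi> - c - g \<xi> * y) \<le> D p / (1 - p)"
    using p by (simp add: pos_le_divide_eq mult_ac)
  with \<xi> that show ?thesis by blast
qed

lemma ratio_ge_persists:
  assumes p: "p \<in> {0<..<1}" and "y \<le> D p / z p" and Q_neg: "\<forall>t\<in>{p..<1}. Q t y < 0"
  shows "\<forall>t\<in>{p..<1}. y \<le> D t / z t"
proof
  fix t assume t: "t \<in> {p..<1}"
  have "\<forall>s\<in>{p..t}. y \<le> D s / z s"
  proof (rule ge_level_preserved)
    show "continuous_on {p..t} (\<lambda>t. D t / z t)"
      using p t by (intro ratio_continuous_on) auto
    fix s assume s: "s \<in> {p..<t}" "D s / z s = y"
    with p t have "s \<in> {0<..<1}" "Q s y < 0" using Q_neg by auto
    with s(2) show "\<exists>l>0. ((\<lambda>t. D t / z t) has_real_derivative l) (at s)"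
      using ratio_has_derivative z_neg by (intro exI[of _ "Q s y / z s"]) (auto simp: divide_neg_neg)
  qed (fact assms(2))
  with t show "y \<le> D t / z t" by auto
qed

lemma ratio_le_persists:
  assumes p: "p \<in> {0<..<1}" and "D p / z p \<le> y" and Q_pos: "\<forall>t\<in>{p..<1}. Q t y > 0"
  shows "\<forall>t\<in>{p..<1}. D t / z t \<le> y"
proof
  fix t assume t: "t \<in> {p..<1}"
  have "\<forall>s\<in>{p..t}. D s / z s \<le> y"
  proof (rule le_level_preserved)
    show "continuous_on {p..t} (\<lambda>t. D t / z t)"
      using p t by (intro ratio_continuous_on) auto
    fix s assume s: "s \<in> {p..<t}" "D s / z s = y"
    with p t have "s \<in> {0<..<1}" "Q s y > 0" using Q_pos by auto
    with s(2) show "\<exists>l<0. ((\<lambda>t. D t / z t) has_real_derivative l) (at s)"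
      using ratio_has_derivative z_neg by (intro exI[of _ "Q s y / z s"]) (auto simp: divide_pos_neg)
  qed (fact assms(2))
  with t show "D t / z t \<le> y" by auto
qed

lemma slope_tendsto: "((\<lambda>t. h t - c - g t * y) \<longlongrightarrow> h 1 - c - g 1 * y) (at_left 1)"
  by (intro tendsto_intros continuous_on_Icc_at_leftD[OF _ zero_less_one] g_cont h_cont)

lemma ratio_eventually_less:
  assumes "y < 0" and "Q 1 y < 0"
  shows "\<forall>\<^sub>F t in at_left 1. D t / z t < y"
proof -
  define \<epsilon> where "\<epsilon> = - Q 1 y / (2 * (1 - y))"
  have "\<epsilon> * (1 - y) = - Q 1 y / 2"
    using assms(1) by (simp add: \<epsilon>_def field_simps)
  moreover have "\<epsilon> - y * \<epsilon> = \<epsilon> * (1 - y)"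
    by (simp add: algebra_simps)
  moreover have "\<epsilon> > 0"
    unfolding \<epsilon>_def using assms by (intro divide_pos_pos) auto
  ultimately have \<epsilon>: "\<epsilon> > 0" "\<epsilon> - y * \<epsilon> < - Q 1 y"
    using assms(2) by simp_all
  have "\<forall>\<^sub>F t in at_left 1. h t - c - g t * y < h 1 - c - g 1 * y + \<epsilon>"
    using \<epsilon>(1) by (intro order_tendstoD(2)[OF slope_tendsto]) simp
  moreover have "\<forall>\<^sub>F t in at_left 1. - D' 1 - \<epsilon> < D t / (1 - t)"
    using \<epsilon>(1) by (intro order_tendstoD(1)[OF D_difference_quotient]) simp
  ultimately have "\<forall>\<^sub>F t in at_left 1. t \<in> {0<..<1} \<and> Q t y < 0
      \<and> h t - c - g t * y < h 1 - c - g 1 * y + \<epsilon> \<and> - D' 1 - \<epsilon> < D t / (1 - t)"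
    using eventually_at_left_real[OF zero_less_one] order_tendstoD(2)[OF Q_tendsto assms(2)]
    by eventually_elim auto
  then obtain t0 where "t0 < 1" and t0: "\<And>t. t0 < t \<Longrightarrow> t < 1 \<Longrightarrow> t \<in> {0<..<1} \<and> Q t y < 0
      \<and> h t - c - g t * y < h 1 - c - g 1 * y + \<epsilon> \<and> - D' 1 - \<epsilon> < D t / (1 - t)"
    unfolding eventually_at_left_field by blast
  have "D p / z p < y" if "t0 < p" "p < 1" for p
  proof (rule ccontr)
    assume "\<not> D p / z p < y"
    with that t0 have "\<forall>t\<in>{p..<1}. y \<le> D t / z t"
      by (intro ratio_ge_persists) auto
    with that t0 \<open>y < 0\<close> obtain \<xi> where \<xi>: "p < \<xi>" "\<xi> < 1"
        "D p / (1 - p) \<le> - y * (h \<xi> - c - g \<xi> * y)"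
      using D_quotient_le_if_ratio_ge_on_tail[of p y] by auto
    have "- y * (h \<xi> - c - g \<xi> * y) \<le> - y * (h 1 - c - g 1 * y + \<epsilon>)"
      using t0[of \<xi>] \<xi> that \<open>y < 0\<close> by (intro mult_left_mono) auto
    moreover have "- y * (h 1 - c - g 1 * y + \<epsilon>) = Q 1 y - D' 1 - y * \<epsilon>"
      by (simp add: Q_def algebra_simps power2_eq_square)
    ultimately show False
      using \<xi>(3) t0[of p] that \<epsilon>(2) by linarith
  qed
  with \<open>t0 < 1\<close> show ?thesis
    unfolding eventually_at_left_field by blast
qed

lemma ratio_eventually_greater:
  assumes "y < 0" and "Q 1 y > 0"
  shows "\<forall>\<^sub>F t in at_left 1. y < D t / z t"
proof -
  define \<epsilon> where "\<epsilon> = Q 1 y / (2 * (1 - y))"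
  have "\<epsilon> * (1 - y) = Q 1 y / 2"
    using assms(1) by (simp add: \<epsilon>_def field_simps)
  moreover have "\<epsilon> - y * \<epsilon> = \<epsilon> * (1 - y)"
    by (simp add: algebra_simps)
  moreover have "\<epsilon> > 0"
    unfolding \<epsilon>_def using assms by (intro divide_pos_pos) auto
  ultimately have \<epsilon>: "\<epsilon> > 0" "\<epsilon> - y * \<epsilon> < Q 1 y"
    using assms(2) by simp_all
  have "\<forall>\<^sub>F t in at_left 1. h 1 - c - g 1 * y - \<epsilon> < h t - c - g t * y"
    using \<epsilon>(1) by (intro order_tendstoD(1)[OF slope_tendsto]) simp
  moreover have "\<forall>\<^sub>F t in at_left 1. D t / (1 - t) < - D' 1 + \<epsilon>"
    using \<epsilon>(1) by (intro order_tendstoD(2)[OF D_difference_quotient]) simp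
  ultimately have "\<forall>\<^sub>F t in at_left 1. t \<in> {0<..<1} \<and> Q t y > 0
      \<and> h 1 - c - g 1 * y - \<epsilon> < h t - c - g t * y \<and> D t / (1 - t) < - D' 1 + \<epsilon>"
    using eventually_at_left_real[OF zero_less_one] order_tendstoD(1)[OF Q_tendsto assms(2)]
    by eventually_elim auto
  then obtain t0 where "t0 < 1" and t0: "\<And>t. t0 < t \<Longrightarrow> t < 1 \<Longrightarrow> t \<in> {0<..<1} \<and> Q t y > 0
      \<and> h 1 - c - g 1 * y - \<epsilon> < h t - c - g t * y \<and> D t / (1 - t) < - D' 1 + \<epsilon>"
    unfolding eventually_at_left_field by blast
  have "y < D p / z p" if "t0 < p" "p < 1" for p
  proof (rule ccontr)
    assume "\<not> y < D p / z p"
    with that t0 have "\<forall>t\<in>{p..<1}. D t / z t \<le> y"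
      by (intro ratio_le_persists) auto
    with that t0 \<open>y < 0\<close> obtain \<xi> where \<xi>: "p < \<xi>" "\<xi> < 1"
        "- y * (h \<xi> - c - g \<xi> * y) \<le> D p / (1 - p)"
      using D_quotient_ge_if_ratio_le_on_tail[of p y] by auto
    have "- y * (h 1 - c - g 1 * y - \<epsilon>) \<le> - y * (h \<xi> - c - g \<xi> * y)"
      using t0[of \<xi>] \<xi> that \<open>y < 0\<close> by (intro mult_left_mono) auto
    moreover have "- y * (h 1 - c - g 1 * y - \<epsilon>) = Q 1 y - D' 1 + y * \<epsilon>"
      by (simp add: Q_def algebra_simps power2_eq_square)
    ultimately show False
      using \<xi>(3) t0[of p] that \<epsilon>(2) by linarith
  qed
  with \<open>t0 < 1\<close> show ?thesis
    unfolding eventually_at_left_field by blast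
qed

lemma ratio_tendsto_smaller_root:
  assumes "D' 1 \<le> 0"
  shows "((\<lambda>t. D t / z t) \<longlongrightarrow> (h 1 - c - sqrt ((h 1 - c)\<^sup>2 - 4 * D' 1 * g 1)) / (2 * g 1))
    (at_left 1)"
proof -
  note root = quadratic_sign_near_smaller_root[OF g_pos_at_1 assms, where a = "h 1 - c", folded Q_def]
  show ?thesis
  proof (rule order_tendstoI)
    fix y
    assume y: "(h 1 - c - sqrt ((h 1 - c)\<^sup>2 - 4 * D' 1 * g 1)) / (2 * g 1) < y"
    show "\<forall>\<^sub>F t in at_left 1. D t / z t < y"
    proof (cases "y < 0")
      case True
      with y root(2) show ?thesis by (intro ratio_eventually_less) auto
    next
      case False
      show ?thesis
        using eventually_at_left_real[OF zero_less_one] by eventually_elim (use False ratio_neg in force)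
    qed
  next
    fix y
    assume "y < (h 1 - c - sqrt ((h 1 - c)\<^sup>2 - 4 * D' 1 * g 1)) / (2 * g 1)"
    with root(1,3) show "\<forall>\<^sub>F t in at_left 1. y < D t / z t"
      by (intro ratio_eventually_greater) auto
  qed
qed

end

theorem lemma9p1:
  fixes f h D D' g :: "real \<Rightarrow> real" and c cstar :: real and z :: "real \<Rightarrow> real"
  assumes f_deriv: "\<forall>x\<in>{0..1}. (f has_real_derivative h x) (at x within {0..1})"
      and h_cont: "continuous_on {0..1} h"
      and f0: "f 0 = 0"
      and D_deriv: "\<forall>x\<in>{0..1}. (D has_real_derivative D' x) (at x within {0..1})"
      and D'_cont: "continuous_on {0..1} D'"
      and D_pos: "\<forall>x\<in>{0<..<1}. D x > 0"
      and D1: "D 1 = 0"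
      and g_cont: "continuous_on {0..1} g"
      and g_pos: "\<forall>x\<in>{0<..1}. g x > 0"
      and g0: "g 0 = 0"
      and limsup: "Limsup (at_right 0) (\<lambda>\<phi>. ereal (D \<phi> * g \<phi> / \<phi>)) < \<infinity>"
      and cstar: "\<forall>c'. (\<exists>w. solP h (\<lambda>\<phi>. D \<phi> * g \<phi>) c' w \<and> w 1 = 0) \<longleftrightarrow> c' \<ge> cstar"
      and c_ge: "c \<ge> cstar"
      and z_sol: "solP h (\<lambda>\<phi>. D \<phi> * g \<phi>) c z"
      and z1: "z 1 = 0"
  shows "(D' 1 < 0 \<longrightarrow>
            ((\<lambda>\<phi>. D \<phi> / z \<phi>) \<longlongrightarrow>
               (h 1 - c - sqrt ((h 1 - c)\<^sup>2 - 4 * D' 1 * g 1)) / (2 * g 1)) (at_left 1))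
       \<and> (D' 1 = 0 \<longrightarrow>
            ((\<lambda>\<phi>. D \<phi> / z \<phi>) \<longlongrightarrow> min 0 ((h 1 - c) / g 1)) (at_left 1))"
proof -
  interpret solution_vanishing_at_one h D D' g z c
    using D_deriv D'_cont h_cont D_pos D1 g_cont g_pos z_sol z1 by unfold_locales
  show ?thesis
    using ratio_tendsto_smaller_root smaller_root_degenerate[OF g_pos_at_1, of "D' 1" "h 1 - c"]
    by auto
qed

end
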